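(* For every odd $k\ge3$, the parity–majority distribution $P_{\rm MAJ}$ (a distribution on functions $\Omega^{2k}\to\{0,1\}$) satisfies SYM, BAL, MIN and UNI, where these conditions are read with arity $2k$ in place of $k$.
   Context: $\Omega=\{\pm1\}$, $q=2$, $k\ge3$ odd. For $\tau\in\Omega^{2k}$ and a permutation $\theta$ of $[2k]$ define $\psi_{\tau,\theta}:\Omega^{2k}\to\{0,1\}$, $\psi_{\tau,\theta}(\sigma)=\mathbf 1\{\prod_{i=1}^k\sigma_{\theta(i)}\tau_i=1\}\mathbf 1\{\sum_{i=k+1}^{2k}\sigma_{\theta(i)}\tau_i<0\}+\mathbf 1\{\prod_{i=1}^k\sigma_{\theta(i)}\tau_i=-1\}\mathbf 1\{\sum_{i=k+1}^{2k}\sigma_{\theta(i)}\tau_i>0\}$. $\Psi=\{\psi_{\tau,\theta}\}$ and $P_{\rm MAJ}$ is uniform on $\Psi$. Let $K=2k$ be the arity, $\boldsymbol\psi$ a sample from $P=P_{\rm MAJ}$, $\xi=q^{-K}\sum_{\sigma\in\Omega^K}\mathbb E[\boldsymbol\psi(\sigma)]$, $\psi^{\theta'}(\sigma)=\psi(\sigma_{\theta'(1)},\dots,\sigma_{\theta'(K)})$. SYM: for all $i\in[K]$, $\omega\in\Omega$, $\psi\in\Psi$, $\sum_{\tau\in\Omega^K}\mathbf 1\{\tau_i=\omega\}\psi(\tau)=q^{K-1}\xi$, and $P(\psi)=P(\psi^{\theta'})$ for every permutation $\theta'$ of $[K]$. BAL: $\phi(\mu)=\sum_{\tau\in\Omega^K}\mathbb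 E[\boldsymbol\psi(\tau)]\prod_{i=1}^K\mu(\tau_i)$ is concave on distributions on $\Omega$ and maximised at the uniform distribution. MIN: among distributions $\rho$ on $\Omega\times\Omega$ with both marginals uniform, $\varphi(\rho)=\sum_{\sigma,\tau\in\Omega^K}\mathbb E[\boldsymbol\psi(\sigma)\boldsymbol\psi(\tau)]\prod_{i=1}^K\rho(\sigma_i,\tau_i)$ has the uniform distribution as unique global minimiser. UNI: every CSP with constraint functions from $\Psi$ (constraint $a$ on a $K$-tuple $\partial a$ of variables) in which each constraint has pairwise distinct variables and whose bipartite variable–constraint graph is unicyclic admits $\sigma$ with $\prod_a\psi_a(\sigma(\partial a))>0$. *)

theory Defs
  imports "HOL-Probability.Probability"
begin

text \<open>Omega = {-1,1} (as integers); an element of Omega^K is an extensional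
  function on the index set {0..<K} (indices shifted by one w.r.t. the paper).\<close>

definition Om :: "int set" where "Om = {-1, 1}"

definition OmK :: "nat \<Rightarrow> (nat \<Rightarrow> int) set" where
  "OmK K = {0..<K} \<rightarrow>\<^sub>E Om"

definition psiMAJ :: "nat \<Rightarrow> (nat \<Rightarrow> int) \<Rightarrow> (nat \<Rightarrow> nat) \<Rightarrow> (nat \<Rightarrow> int) \<Rightarrow> real" where
  "psiMAJ k \<tau> \<theta> \<sigma> =
     (if \<sigma> \<in> OmK (2*k) then
        (if ((\<Prod>i<k. \<sigma> (\<theta> i) * \<tau> i) = 1 \<and> (\<Sum>i\<in>{k..<2*k}. \<sigma> (\<theta> i) * \<tau> i) < 0)
          \<or> ((\<Prod>i<k. \<sigma> (\<theta> i) * \<tau> i) = -1 \<and> (\<Sum>i\<in>{k..<2*k}. \<sigma> (\<theta> i) * \<tau> i) > 0)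
         then 1 else 0)
      else 0)"

definition PsiMAJ :: "nat \<Rightarrow> ((nat \<Rightarrow> int) \<Rightarrow> real) set" where
  "PsiMAJ k = {psiMAJ k \<tau> \<theta> | \<tau> \<theta>. \<tau> \<in> OmK (2*k) \<and> \<theta> permutes {0..<2*k}}"

definition PMAJ :: "nat \<Rightarrow> ((nat \<Rightarrow> int) \<Rightarrow> real) pmf" where
  "PMAJ k = pmf_of_set (PsiMAJ k)"

definition xi :: "nat \<Rightarrow> ((nat \<Rightarrow> int) \<Rightarrow> real) pmf \<Rightarrow> real" where
  "xi K P = (1 / 2 ^ K) * (\<Sum>\<sigma>\<in>OmK K. measure_pmf.expectation P (\<lambda>\<psi>. \<psi> \<sigma>))"

definition permfun :: "((nat \<Rightarrow> int) \<Rightarrow> real) \<Rightarrow> (nat \<Rightarrow> nat) \<Rightarrow> ((nat \<Rightarrow> int) \<Rightarrow> real)" where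
  "permfun \<psi> \<theta>' = (\<lambda>\<sigma>. \<psi> (\<lambda>i. \<sigma> (\<theta>' i)))"

definition SYM_cond :: "nat \<Rightarrow> ((nat \<Rightarrow> int) \<Rightarrow> real) set \<Rightarrow> ((nat \<Rightarrow> int) \<Rightarrow> real) pmf \<Rightarrow> bool" where
  "SYM_cond K Psi P \<longleftrightarrow>
     (\<forall>i<K. \<forall>\<omega>\<in>Om. \<forall>\<psi>\<in>Psi.
        (\<Sum>\<tau>\<in>OmK K. (if \<tau> i = \<omega> then 1 else 0) * \<psi> \<tau>) = 2 ^ (K - 1) * xi K P)
   \<and> (\<forall>\<theta>'. \<theta>' permutes {0..<K} \<longrightarrow> (\<forall>\<psi>. pmf P \<psi> = pmf P (permfun \<psi> \<theta>')))"

definition distOm :: "(int \<Rightarrow> real) \<Rightarrow> bool" where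
  "distOm \<mu> \<longleftrightarrow> (\<forall>x. \<mu> x \<ge> 0) \<and> (\<forall>x. x \<notin> Om \<longrightarrow> \<mu> x = 0) \<and> (\<Sum>x\<in>Om. \<mu> x) = 1"

definition unifOm :: "int \<Rightarrow> real" where
  "unifOm = (\<lambda>x. if x \<in> Om then 1/2 else 0)"

definition phiBAL :: "nat \<Rightarrow> ((nat \<Rightarrow> int) \<Rightarrow> real) pmf \<Rightarrow> (int \<Rightarrow> real) \<Rightarrow> real" where
  "phiBAL K P \<mu> = (\<Sum>\<tau>\<in>OmK K. measure_pmf.expectation P (\<lambda>\<psi>. \<psi> \<tau>) * (\<Prod>i<K. \<mu> (\<tau> i)))"

definition BAL_cond :: "nat \<Rightarrow> ((nat \<Rightarrow> int) \<Rightarrow> real) pmf \<Rightarrow> bool" where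
  "BAL_cond K P \<longleftrightarrow>
     (\<forall>\<mu>1 \<mu>2 t. distOm \<mu>1 \<longrightarrow> distOm \<mu>2 \<longrightarrow> 0 \<le> t \<longrightarrow> t \<le> 1 \<longrightarrow>
        t * phiBAL K P \<mu>1 + (1 - t) * phiBAL K P \<mu>2
          \<le> phiBAL K P (\<lambda>x. t * \<mu>1 x + (1 - t) * \<mu>2 x))
   \<and> (\<forall>\<mu>. distOm \<mu> \<longrightarrow> phiBAL K P \<mu> \<le> phiBAL K P unifOm)"

definition coupOm :: "(int \<times> int \<Rightarrow> real) \<Rightarrow> bool" where
  "coupOm \<rho> \<longleftrightarrow> (\<forall>z. \<rho> z \<ge> 0) \<and> (\<forall>z. z \<notin> Om \<times> Om \<longrightarrow> \<rho> z = 0)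
     \<and> (\<forall>a\<in>Om. (\<Sum>b\<in>Om. \<rho> (a, b)) = 1/2) \<and> (\<forall>b\<in>Om. (\<Sum>a\<in>Om. \<rho> (a, b)) = 1/2)"

definition unifOm2 :: "int \<times> int \<Rightarrow> real" where
  "unifOm2 = (\<lambda>z. if z \<in> Om \<times> Om then 1/4 else 0)"

definition phiMIN :: "nat \<Rightarrow> ((nat \<Rightarrow> int) \<Rightarrow> real) pmf \<Rightarrow> (int \<times> int \<Rightarrow> real) \<Rightarrow> real" where
  "phiMIN K P \<rho> = (\<Sum>\<sigma>\<in>OmK K. \<Sum>\<tau>\<in>OmK K.
      measure_pmf.expectation P (\<lambda>\<psi>. \<psi> \<sigma> * \<psi> \<tau>) * (\<Prod>i<K. \<rho> (\<sigma> i, \<tau> i)))"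

definition MIN_cond :: "nat \<Rightarrow> ((nat \<Rightarrow> int) \<Rightarrow> real) pmf \<Rightarrow> bool" where
  "MIN_cond K P \<longleftrightarrow> (\<forall>\<rho>. coupOm \<rho> \<longrightarrow> \<rho> \<noteq> unifOm2 \<longrightarrow> phiMIN K P unifOm2 < phiMIN K P \<rho>)"

text \<open>CSPs: variables V, constraints F, each constraint a has a K-tuple of
  variables dv a (a list) and a constraint function ps a.\<close>

definition bigraph :: "('c \<Rightarrow> 'v list) \<Rightarrow> 'c set \<Rightarrow> (('v + 'c) \<times> ('v + 'c)) set" where
  "bigraph dv F = {(Inl v, Inr a) | v a. a \<in> F \<and> v \<in> set (dv a)}
                \<union> {(Inr a, Inl v) | v a. a \<in> F \<and> v \<in> set (dv a)}"

text \<open>Unicyclic: the (finite, simple) bipartite factor graph is connected and has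
  exactly as many edges as vertices (equivalently, it is connected and contains exactly one cycle).\<close>
definition unicyclic_csp :: "nat \<Rightarrow> ((nat \<Rightarrow> int) \<Rightarrow> real) set \<Rightarrow> 'v set \<Rightarrow> 'c set
    \<Rightarrow> ('c \<Rightarrow> 'v list) \<Rightarrow> ('c \<Rightarrow> (nat \<Rightarrow> int) \<Rightarrow> real) \<Rightarrow> bool" where
  "unicyclic_csp K Psi V F dv ps \<longleftrightarrow>
     finite V \<and> finite F
   \<and> (\<forall>a\<in>F. length (dv a) = K \<and> distinct (dv a) \<and> set (dv a) \<subseteq> V \<and> ps a \<in> Psi)
   \<and> (\<forall>x\<in>Inl ` V \<union> Inr ` F. \<forall>y\<in>Inl ` V \<union> Inr ` F. (x, y) \<in> (bigraph dv F)\<^sup>*)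
   \<and> card {(v, a). a \<in> F \<and> v \<in> set (dv a)} = card V + card F"

definition tuple_of :: "nat \<Rightarrow> ('v \<Rightarrow> int) \<Rightarrow> 'v list \<Rightarrow> nat \<Rightarrow> int" where
  "tuple_of K \<sigma> xs = (\<lambda>i. if i < K then \<sigma> (xs ! i) else undefined)"

definition satisfiable_csp :: "nat \<Rightarrow> 'v set \<Rightarrow> 'c set
    \<Rightarrow> ('c \<Rightarrow> 'v list) \<Rightarrow> ('c \<Rightarrow> (nat \<Rightarrow> int) \<Rightarrow> real) \<Rightarrow> bool" where
  "satisfiable_csp K V F dv ps \<longleftrightarrow>
     (\<exists>\<sigma>. (\<forall>v\<in>V. \<sigma> v \<in> Om) \<and> (\<Prod>a\<in>F. ps a (tuple_of K \<sigma> (dv a))) > 0)"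

end

theory Submission
  imports Defs
begin

text \<open>Flipping one parity variable swaps \<open>\<psi>\<close> between \<open>0\<close> and \<open>1\<close>, because the majority sum of
  \<open>k\<close> signs is odd and hence never zero. So every constraint takes the value \<open>1\<close> on exactly half
  of each coordinate slice, and flipping \<open>\<tau>\<^sub>1\<close> shows that at each point exactly half of the
  constraints do; this gives SYM and makes \<open>\<phi>\<^sub>B\<^sub>A\<^sub>L(\<mu>)\<close> a multiple of \<open>(\<Sum>\<mu>)\<^sup>2\<^sup>k\<close>, whence BAL.

  Negating all \<open>2k\<close> inputs fixes \<open>\<psi>\<close> since \<open>k\<close> is odd, so \<open>\<psi>\<close> has no Fourier weight on odd
  levels. A coupling with uniform marginals is \<open>\<rho>(a,b) = (1 + c a b)/4\<close>, and then
  \<open>\<phi>\<^sub>M\<^sub>I\<^sub>N\<close> averages over \<open>\<psi>\<close> the squared Fourier coefficients at \<open>S\<close> weighted by \<open>c\<^bsup>|S|\<^esup>\<close>, so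
  only even powers of \<open>c\<close> occur;
  Parseval for the \<open>0/1\<close>-valued \<open>\<psi>\<close> of mean \<open>1/2\<close> forces weight above level \<open>0\<close>, so \<open>c = 0\<close>
  is the unique minimiser (MIN).

  In a connected unicyclic factor graph every set of constraints has at most one more
  incidence than variables and constraints together, so some constraint shares at most two
  variables with the others. As \<open>k \<ge> 3\<close> one of its parity variables is private, and setting it
  satisfies the constraint; peeling constraints off one by one gives UNI.\<close>

subsection \<open>The hypercube\<close>

lemma Om_iff: "x \<in> Om \<longleftrightarrow> x = -1 \<or> x = 1"
  by (auto simp: Om_def)

lemma mem_OmK_iff: "\<sigma> \<in> OmK n \<longleftrightarrow> (\<forall>i<n. \<sigma> i \<in> Om) \<and> (\<forall>i\<ge>n. \<sigma> i = undefined)"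
  by (auto simp: OmK_def PiE_def extensional_def Pi_def)

lemma OmK_eq_PiE: "OmK n = PiE {..<n} (\<lambda>_. Om)"
  by (simp add: OmK_def atLeast0LessThan)

lemma finite_OmK: "finite (OmK n)"
  unfolding OmK_def by (auto intro!: finite_PiE simp: Om_def)

lemma card_OmK: "card (OmK n) = 2 ^ n"
proof -
  have "card Om = 2" by (simp add: Om_def)
  then show ?thesis unfolding OmK_def by (simp add: card_PiE)
qed

lemma OmK_eqI:
  assumes "x \<in> OmK n" "y \<in> OmK n" "\<And>i. i < n \<Longrightarrow> x i = y i"
  shows "x = y"
  using assms by (auto simp: mem_OmK_iff fun_eq_iff) (metis not_le)

lemma sum_involution_half:
  fixes f u :: "'a \<Rightarrow> real"
  assumes "finite A" "\<And>x. x \<in> A \<Longrightarrow> g x \<in> A" "\<And>x. x \<in> A \<Longrightarrow> g (g x) = x"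
    and "\<And>x. x \<in> A \<Longrightarrow> f (g x) = u x - f x"
  shows "sum f A = sum u A / 2"
proof -
  have "bij_betw g A A"
    by (rule bij_betwI[where g = g]) (auto simp: assms)
  then have "sum f A = sum (\<lambda>x. f (g x)) A"
    by (simp add: sum.reindex_bij_betw)
  also have "\<dots> = sum u A - sum f A"
    using assms(4) by (simp add: sum_subtractf)
  finally show ?thesis by simp
qed

definition flip_at :: "nat \<Rightarrow> (nat \<Rightarrow> int) \<Rightarrow> nat \<Rightarrow> int" where
  "flip_at p \<sigma> = \<sigma>(p := - \<sigma> p)"

lemma flip_at_in_OmK: "p < n \<Longrightarrow> \<sigma> \<in> OmK n \<Longrightarrow> flip_at p \<sigma> \<in> OmK n"
  by (auto simp: mem_OmK_iff flip_at_def Om_iff)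

lemma flip_at_flip_at [simp]: "flip_at p (flip_at p \<sigma>) = \<sigma>"
  by (auto simp: flip_at_def)

lemma sum_coord_indicator_OmK:
  assumes "i < n" "\<omega> \<in> Om"
  shows "(\<Sum>\<tau>\<in>OmK n. if \<tau> i = \<omega> then 1 else 0 :: real) = 2 ^ n / 2"
proof -
  have "(\<Sum>\<tau>\<in>OmK n. if \<tau> i = \<omega> then 1 else 0 :: real) = (\<Sum>\<tau>\<in>OmK n. 1) / 2"
  proof (rule sum_involution_half[where g = "flip_at i"])
    fix x assume "x \<in> OmK n"
    then have "x i \<in> Om" using assms by (auto simp: mem_OmK_iff)
    then show "(if flip_at i x i = \<omega> then 1 else 0 :: real) = 1 - (if x i = \<omega> then 1 else 0)"
      using assms(2) by (auto simp: flip_at_def Om_iff)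
  qed (auto simp: finite_OmK flip_at_in_OmK assms)
  then show ?thesis by (simp add: card_OmK)
qed

lemma prod_in_pm_one: "finite A \<Longrightarrow> (\<forall>i\<in>A. f i \<in> {1, -1::int}) \<Longrightarrow> prod f A \<in> {1, -1}"
  by (induction A rule: finite_induct) auto

lemma odd_sum_pm_one_iff: "finite A \<Longrightarrow> (\<forall>i\<in>A. f i \<in> {1, -1::int}) \<Longrightarrow> odd (sum f A) \<longleftrightarrow> odd (card A)"
  by (induction A rule: finite_induct) auto

lemma prod_negate_one_factor:
  fixes a :: "'a \<Rightarrow> 'b::comm_ring_1"
  assumes "finite A" "j \<in> A"
  shows "(\<Prod>i\<in>A. if i = j then - a i else a i) = - prod a A"
proof -
  have "(\<Prod>i\<in>A. if i = j then - a i else a i) = - a j * (\<Prod>i\<in>A - {j}. if i = j then - a i else a i)"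
    using assms by (simp add: prod.remove)
  also have "(\<Prod>i\<in>A - {j}. if i = j then - a i else a i) = prod a (A - {j})"
    by (intro prod.cong) auto
  finally show ?thesis
    using assms by (simp add: prod.remove)
qed

subsection \<open>The parity--majority constraint\<close>

definition parity_part :: "nat \<Rightarrow> (nat \<Rightarrow> int) \<Rightarrow> (nat \<Rightarrow> nat) \<Rightarrow> (nat \<Rightarrow> int) \<Rightarrow> int" where
  "parity_part k \<tau> \<theta> \<sigma> = (\<Prod>i<k. \<sigma> (\<theta> i) * \<tau> i)"

definition majority_part :: "nat \<Rightarrow> (nat \<Rightarrow> int) \<Rightarrow> (nat \<Rightarrow> nat) \<Rightarrow> (nat \<Rightarrow> int) \<Rightarrow> int" where
  "majority_part k \<tau> \<theta> \<sigma> = (\<Sum>i\<in>{k..<2*k}. \<sigma> (\<theta> i) * \<tau> i)"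

definition maj_gate :: "int \<Rightarrow> int \<Rightarrow> real" where
  "maj_gate P S = (if (P = 1 \<and> S < 0) \<or> (P = -1 \<and> S > 0) then 1 else 0)"

lemma psiMAJ_eq_maj_gate:
  "psiMAJ k \<tau> \<theta> \<sigma> =
     (if \<sigma> \<in> OmK (2*k) then maj_gate (parity_part k \<tau> \<theta> \<sigma>) (majority_part k \<tau> \<theta> \<sigma>) else 0)"
  unfolding psiMAJ_def maj_gate_def parity_part_def majority_part_def by simp

lemma psiMAJ_0_or_1: "psiMAJ k \<tau> \<theta> \<sigma> = 0 \<or> psiMAJ k \<tau> \<theta> \<sigma> = 1"
  unfolding psiMAJ_def by auto

lemma maj_gate_uminus_left: "P \<in> {1, -1} \<Longrightarrow> S \<noteq> 0 \<Longrightarrow> maj_gate (- P) S = 1 - maj_gate P S"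
  by (auto simp: maj_gate_def)

lemma maj_gate_uminus_both: "maj_gate (- P) (- S) = maj_gate P S"
  by (auto simp: maj_gate_def)

definition negate_below :: "nat \<Rightarrow> (nat \<Rightarrow> int) \<Rightarrow> nat \<Rightarrow> int" where
  "negate_below n \<sigma> = (\<lambda>i. if i < n then - \<sigma> i else \<sigma> i)"

lemma negate_below_in_OmK: "\<sigma> \<in> OmK n \<Longrightarrow> negate_below n \<sigma> \<in> OmK n"
  by (auto simp: mem_OmK_iff negate_below_def Om_iff)

lemma negate_below_negate_below [simp]: "negate_below n (negate_below n \<sigma>) = \<sigma>"
  by (auto simp: negate_below_def)

locale maj_constraint =
  fixes k :: nat and \<tau> :: "nat \<Rightarrow> int" and \<theta> :: "nat \<Rightarrow> nat"
  assumes odd_k: "odd k" and \<tau>_in_OmK: "\<tau> \<in> OmK (2*k)" and \<theta>_permutes: "\<theta> permutes {0..<2*k}"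
begin

abbreviation "\<psi> \<equiv> psiMAJ k \<tau> \<theta>"

lemma \<theta>_less: "i < 2*k \<Longrightarrow> \<theta> i < 2*k"
  using permutes_in_image[OF \<theta>_permutes] by auto

lemma \<theta>_eq_iff: "i < 2*k \<Longrightarrow> j < 2*k \<Longrightarrow> \<theta> i = \<theta> j \<longleftrightarrow> i = j"
  using permutes_inj[OF \<theta>_permutes] by (auto dest: injD)

lemma factor_pm_one: "\<sigma> \<in> OmK (2*k) \<Longrightarrow> i < 2*k \<Longrightarrow> \<sigma> (\<theta> i) * \<tau> i \<in> {1, -1}"
  using \<theta>_less[of i] \<tau>_in_OmK unfolding mem_OmK_iff Om_iff by fastforce

lemma parity_part_pm_one: "\<sigma> \<in> OmK (2*k) \<Longrightarrow> parity_part k \<tau> \<theta> \<sigma> \<in> {1, -1}"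
  using factor_pm_one[of \<sigma>] unfolding parity_part_def by (intro prod_in_pm_one) auto

lemma majority_part_nonzero: "\<sigma> \<in> OmK (2*k) \<Longrightarrow> majority_part k \<tau> \<theta> \<sigma> \<noteq> 0"
proof -
  assume "\<sigma> \<in> OmK (2*k)"
  then have "odd (majority_part k \<tau> \<theta> \<sigma>) \<longleftrightarrow> odd (card {k..<2*k})"
    using factor_pm_one[of \<sigma>] unfolding majority_part_def by (intro odd_sum_pm_one_iff) auto
  then show ?thesis using odd_k by auto
qed

lemma psiMAJ_flip_parity_var:
  assumes \<sigma>: "\<sigma> \<in> OmK (2*k)" and j: "j < k"
  shows "\<psi> (flip_at (\<theta> j) \<sigma>) = 1 - \<psi> \<sigma>"
proof -
  have "parity_part k \<tau> \<theta> (flip_at (\<theta> j) \<sigma>) = (\<Prod>i<k. if i = j then - (\<sigma> (\<theta> i) * \<tau> i) else \<sigma> (\<theta> i) * \<tau> i)"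
    unfolding parity_part_def flip_at_def using \<theta>_eq_iff j by (intro prod.cong) auto
  also have "\<dots> = - parity_part k \<tau> \<theta> \<sigma>"
    unfolding parity_part_def using j by (subst prod_negate_one_factor) auto
  finally have P: "parity_part k \<tau> \<theta> (flip_at (\<theta> j) \<sigma>) = - parity_part k \<tau> \<theta> \<sigma>" .
  have S: "majority_part k \<tau> \<theta> (flip_at (\<theta> j) \<sigma>) = majority_part k \<tau> \<theta> \<sigma>"
    unfolding majority_part_def flip_at_def using \<theta>_eq_iff j by (intro sum.cong) auto
  show ?thesis
    using flip_at_in_OmK[OF _ \<sigma>, of "\<theta> j"] \<theta>_less[of j] j \<sigma>
    by (simp add: psiMAJ_eq_maj_gate P S
        maj_gate_uminus_left[OF parity_part_pm_one[OF \<sigma>] majority_part_nonzero[OF \<sigma>]])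
qed

text \<open>Negating all coordinates negates the parity part (it has \<open>k\<close> factors, \<open>k\<close> odd) and the
  majority part.\<close>
lemma psiMAJ_negate_below:
  assumes \<sigma>: "\<sigma> \<in> OmK (2*k)"
  shows "\<psi> (negate_below (2*k) \<sigma>) = \<psi> \<sigma>"
proof -
  have "parity_part k \<tau> \<theta> (negate_below (2*k) \<sigma>) = (\<Prod>i<k. - (\<sigma> (\<theta> i) * \<tau> i))"
    unfolding parity_part_def negate_below_def using \<theta>_less by (intro prod.cong) auto
  also have "\<dots> = - parity_part k \<tau> \<theta> \<sigma>"
    using odd_k by (simp add: prod_uminus parity_part_def)
  finally have P: "parity_part k \<tau> \<theta> (negate_below (2*k) \<sigma>) = - parity_part k \<tau> \<theta> \<sigma>" .
  have "majority_part k \<tau> \<theta> (negate_below (2*k) \<sigma>) = (\<Sum>i\<in>{k..<2*k}. - (\<sigma> (\<theta> i) * \<tau> i))"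
    unfolding majority_part_def negate_below_def using \<theta>_less by (intro sum.cong) auto
  then have S: "majority_part k \<tau> \<theta> (negate_below (2*k) \<sigma>) = - majority_part k \<tau> \<theta> \<sigma>"
    by (simp add: sum_negf majority_part_def)
  show ?thesis
    using negate_below_in_OmK[OF \<sigma>] \<sigma> by (simp add: psiMAJ_eq_maj_gate P S maj_gate_uminus_both)
qed

lemma sum_psiMAJ: "(\<Sum>\<sigma>\<in>OmK (2*k). \<psi> \<sigma>) = 2 ^ (2*k) / 2"
proof -
  have "0 < k" using odd_k by (rule odd_pos)
  then have "(\<Sum>\<sigma>\<in>OmK (2*k). \<psi> \<sigma>) = (\<Sum>\<sigma>\<in>OmK (2*k). 1) / 2"
    by (intro sum_involution_half[where g = "flip_at (\<theta> 0)"])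
       (use \<theta>_less in \<open>auto simp: finite_OmK flip_at_in_OmK psiMAJ_flip_parity_var\<close>)
  then show ?thesis by (simp add: card_OmK)
qed

lemma sum_coord_psiMAJ:
  assumes "3 \<le> k" "i < 2*k" "\<omega> \<in> Om"
  shows "(\<Sum>\<sigma>\<in>OmK (2*k). (if \<sigma> i = \<omega> then 1 else 0) * \<psi> \<sigma>) = 2 ^ (2*k) / 4"
proof -
  obtain j where j: "j < k" "\<theta> j \<noteq> i"
  proof (cases "\<theta> 0 = i")
    case True
    then show ?thesis using that[of 1] \<theta>_eq_iff[of 0 1] \<open>3 \<le> k\<close> by auto
  next
    case False
    then show ?thesis using that[of 0] \<open>3 \<le> k\<close> by auto
  qed
  have "(\<Sum>\<sigma>\<in>OmK (2*k). (if \<sigma> i = \<omega> then 1 else 0) * \<psi> \<sigma>)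
      = (\<Sum>\<sigma>\<in>OmK (2*k). if \<sigma> i = \<omega> then 1 else 0) / 2"
  proof (rule sum_involution_half[where g = "flip_at (\<theta> j)"])
    fix x assume x: "x \<in> OmK (2*k)"
    have "flip_at (\<theta> j) x i = x i" using j by (simp add: flip_at_def)
    then show "(if flip_at (\<theta> j) x i = \<omega> then 1 else 0) * \<psi> (flip_at (\<theta> j) x) =
         (if x i = \<omega> then 1 else 0) - (if x i = \<omega> then 1 else 0) * \<psi> x"
      using psiMAJ_flip_parity_var[OF x j(1)] by (simp add: algebra_simps)
  qed (use \<theta>_less j in \<open>auto simp: finite_OmK flip_at_in_OmK\<close>)
  also have "\<dots> = 2 ^ (2*k) / 4"
    using sum_coord_indicator_OmK[OF assms(2,3)] by simp
  finally show ?thesis .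
qed

end


subsection \<open>Symmetry\<close>

lemma PsiMAJ_eq_image:
  "PsiMAJ k = (\<lambda>(\<tau>, \<theta>). psiMAJ k \<tau> \<theta>) ` (OmK (2*k) \<times> {\<theta>. \<theta> permutes {0..<2*k}})"
  by (auto simp: PsiMAJ_def)

lemma finite_PsiMAJ: "finite (PsiMAJ k)"
  unfolding PsiMAJ_eq_image
  by (intro finite_imageI finite_cartesian_product finite_OmK finite_permutations) auto

lemma PsiMAJ_nonempty: "PsiMAJ k \<noteq> {}"
proof -
  have "(\<lambda>i. if i < 2*k then 1 else undefined) \<in> OmK (2*k)"
    by (auto simp: mem_OmK_iff Om_iff)
  then show ?thesis
    unfolding PsiMAJ_def using permutes_id by blast
qed

lemma card_PsiMAJ_pos: "0 < card (PsiMAJ k)"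
  using finite_PsiMAJ PsiMAJ_nonempty by (simp add: card_gt_0_iff)

lemma expectation_PMAJ: "measure_pmf.expectation (PMAJ k) f = sum f (PsiMAJ k) / card (PsiMAJ k)"
  unfolding PMAJ_def by (rule integral_pmf_of_set[OF PsiMAJ_nonempty finite_PsiMAJ])

lemma pmf_PMAJ: "pmf (PMAJ k) \<psi> = indicator (PsiMAJ k) \<psi> / card (PsiMAJ k)"
  unfolding PMAJ_def by (rule pmf_of_set[OF PsiMAJ_nonempty finite_PsiMAJ])

lemma PsiMAJ_elim:
  assumes "\<psi> \<in> PsiMAJ k" "odd k"
  obtains \<tau> \<theta> where "\<psi> = psiMAJ k \<tau> \<theta>" "maj_constraint k \<tau> \<theta>"
  using assms unfolding PsiMAJ_def maj_constraint_def by blast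

lemma xi_PMAJ:
  assumes "odd k"
  shows "xi (2*k) (PMAJ k) = 1/2"
proof -
  have "(\<Sum>\<sigma>\<in>OmK (2*k). measure_pmf.expectation (PMAJ k) (\<lambda>\<psi>. \<psi> \<sigma>))
      = (\<Sum>\<psi>\<in>PsiMAJ k. \<Sum>\<sigma>\<in>OmK (2*k). \<psi> \<sigma>) / card (PsiMAJ k)"
    by (simp add: expectation_PMAJ sum_divide_distrib[symmetric] sum.swap[of _ "OmK _"])
  also have "\<dots> = (\<Sum>\<psi>\<in>PsiMAJ k. 2 ^ (2*k) / 2) / card (PsiMAJ k)"
  proof (intro arg_cong[where f = "\<lambda>x. x / _"] sum.cong refl)
    fix \<psi> assume "\<psi> \<in> PsiMAJ k"
    then obtain \<tau> \<theta> where "\<psi> = psiMAJ k \<tau> \<theta>" "maj_constraint k \<tau> \<theta>"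
      using PsiMAJ_elim assms by blast
    then show "(\<Sum>\<sigma>\<in>OmK (2*k). \<psi> \<sigma>) = 2 ^ (2*k) / 2"
      by (simp add: maj_constraint.sum_psiMAJ)
  qed
  finally show ?thesis
    using card_PsiMAJ_pos[of k] by (simp add: xi_def)
qed

lemma comp_permutes_in_OmK:
  assumes "\<theta>' permutes {0..<n}" "\<sigma> \<in> OmK n"
  shows "(\<lambda>i. \<sigma> (\<theta>' i)) \<in> OmK n"
  using assms permutes_in_image[OF assms(1)] permutes_not_in[OF assms(1)]
  by (auto simp: mem_OmK_iff)

lemma comp_permutes_in_OmK_iff:
  assumes "\<theta>' permutes {0..<n}"
  shows "(\<lambda>i. \<sigma> (\<theta>' i)) \<in> OmK n \<longleftrightarrow> \<sigma> \<in> OmK n"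
  using comp_permutes_in_OmK[OF permutes_inv[OF assms], of "\<lambda>i. \<sigma> (\<theta>' i)"]
    comp_permutes_in_OmK[OF assms] permutes_inverses[OF assms]
  by auto

lemma permfun_psiMAJ:
  assumes "\<theta>' permutes {0..<2*k}"
  shows "permfun (psiMAJ k \<tau> \<theta>) \<theta>' = psiMAJ k \<tau> (\<theta>' \<circ> \<theta>)"
  unfolding permfun_def psiMAJ_def using comp_permutes_in_OmK_iff[OF assms] by (intro ext) simp

lemma permfun_in_PsiMAJ:
  assumes "\<theta>' permutes {0..<2*k}" "\<psi> \<in> PsiMAJ k"
  shows "permfun \<psi> \<theta>' \<in> PsiMAJ k"
  using assms permutes_compose[of _ "{0..<2*k}" \<theta>'] permfun_psiMAJ[OF assms(1)]
  unfolding PsiMAJ_def by blast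

lemma permfun_in_PsiMAJ_iff:
  assumes "\<theta>' permutes {0..<2*k}"
  shows "permfun \<psi> \<theta>' \<in> PsiMAJ k \<longleftrightarrow> \<psi> \<in> PsiMAJ k"
proof -
  have "permfun (permfun \<psi> \<theta>') (inv \<theta>') = \<psi>"
    unfolding permfun_def using permutes_inverses[OF assms] by simp
  then show ?thesis
    using permfun_in_PsiMAJ[OF assms] permfun_in_PsiMAJ[OF permutes_inv[OF assms]] by metis
qed

theorem SYM_PMAJ:
  assumes "odd k" "3 \<le> k"
  shows "SYM_cond (2*k) (PsiMAJ k) (PMAJ k)"
  unfolding SYM_cond_def
proof (intro conjI allI impI ballI)
  fix i \<omega> \<psi> assume i: "i < 2*k" and \<omega>: "\<omega> \<in> Om" and "\<psi> \<in> PsiMAJ k"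
  then obtain \<tau> \<theta> where \<psi>: "\<psi> = psiMAJ k \<tau> \<theta>" "maj_constraint k \<tau> \<theta>"
    using PsiMAJ_elim assms(1) by blast
  have half: "(2::real) ^ (2*k - 1) * (1/2) = 2 ^ (2*k) / 4"
    using assms by (cases k) (simp_all add: power_mult_distrib)
  show "(\<Sum>\<tau>\<in>OmK (2*k). (if \<tau> i = \<omega> then 1 else 0) * \<psi> \<tau>) = 2 ^ (2*k - 1) * xi (2*k) (PMAJ k)"
    unfolding \<psi>(1) xi_PMAJ[OF assms(1)] half by (rule maj_constraint.sum_coord_psiMAJ[OF \<psi>(2) assms(2) i \<omega>])
next
  fix \<theta>' \<psi> assume "\<theta>' permutes {0..<2*k}"
  then show "pmf (PMAJ k) \<psi> = pmf (PMAJ k) (permfun \<psi> \<theta>')"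
    by (simp add: pmf_PMAJ permfun_in_PsiMAJ_iff indicator_def)
qed

subsection \<open>Balance\<close>

definition complement_on :: "nat \<Rightarrow> ((nat \<Rightarrow> int) \<Rightarrow> real) \<Rightarrow> (nat \<Rightarrow> int) \<Rightarrow> real" where
  "complement_on n \<psi> = (\<lambda>\<sigma>. if \<sigma> \<in> OmK n then 1 - \<psi> \<sigma> else 0)"

lemma (in maj_constraint) complement_psiMAJ:
  "complement_on (2*k) \<psi> = psiMAJ k (flip_at 0 \<tau>) \<theta>"
proof
  fix \<sigma>
  show "complement_on (2*k) \<psi> \<sigma> = psiMAJ k (flip_at 0 \<tau>) \<theta> \<sigma>"
  proof (cases "\<sigma> \<in> OmK (2*k)")
    case \<sigma>: True
    have k: "0 < k" using odd_k by (rule odd_pos)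
    have "parity_part k (flip_at 0 \<tau>) \<theta> \<sigma> = (\<Prod>i<k. if i = 0 then - (\<sigma> (\<theta> i) * \<tau> i) else \<sigma> (\<theta> i) * \<tau> i)"
      unfolding parity_part_def flip_at_def by (intro prod.cong) auto
    also have "\<dots> = - parity_part k \<tau> \<theta> \<sigma>"
      unfolding parity_part_def using k by (subst prod_negate_one_factor) auto
    finally have P: "parity_part k (flip_at 0 \<tau>) \<theta> \<sigma> = - parity_part k \<tau> \<theta> \<sigma>" .
    have S: "majority_part k (flip_at 0 \<tau>) \<theta> \<sigma> = majority_part k \<tau> \<theta> \<sigma>"
      unfolding majority_part_def flip_at_def using k by (intro sum.cong) auto
    show ?thesis
      using \<sigma> by (simp add: complement_on_def psiMAJ_eq_maj_gate P S
          maj_gate_uminus_left[OF parity_part_pm_one[OF \<sigma>] majority_part_nonzero[OF \<sigma>]])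
  qed (simp add: complement_on_def psiMAJ_def)
qed

lemma (in maj_constraint) complement_psiMAJ_in_PsiMAJ: "complement_on (2*k) \<psi> \<in> PsiMAJ k"
  using complement_psiMAJ flip_at_in_OmK[OF _ \<tau>_in_OmK, of 0] odd_pos[OF odd_k] \<theta>_permutes
  unfolding PsiMAJ_def by auto

text \<open>Complementation is an involution of \<open>\<Psi>\<close>, so \<open>\<psi>(\<sigma>)\<close> is \<open>1\<close> for exactly half of the constraints.\<close>
lemma expectation_PMAJ_point:
  assumes "odd k" "\<sigma> \<in> OmK (2*k)"
  shows "measure_pmf.expectation (PMAJ k) (\<lambda>\<psi>. \<psi> \<sigma>) = 1/2"
proof -
  have "(\<Sum>\<psi>\<in>PsiMAJ k. \<psi> \<sigma>) = (\<Sum>\<psi>\<in>PsiMAJ k. 1) / 2"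
  proof (rule sum_involution_half[where g = "complement_on (2*k)"])
    fix \<psi> assume "\<psi> \<in> PsiMAJ k"
    then obtain \<tau> \<theta> where \<psi>: "\<psi> = psiMAJ k \<tau> \<theta>" "maj_constraint k \<tau> \<theta>"
      using PsiMAJ_elim assms(1) by blast
    then show "complement_on (2*k) \<psi> \<in> PsiMAJ k"
      by (simp add: maj_constraint.complement_psiMAJ_in_PsiMAJ)
    show "complement_on (2*k) (complement_on (2*k) \<psi>) = \<psi>"
      using \<psi>(1) by (auto simp: complement_on_def psiMAJ_def fun_eq_iff)
    show "complement_on (2*k) \<psi> \<sigma> = 1 - \<psi> \<sigma>"
      using assms(2) by (simp add: complement_on_def)
  qed (rule finite_PsiMAJ)
  then show ?thesis
    using card_PsiMAJ_pos[of k] by (simp add: expectation_PMAJ)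
qed

lemma phiBAL_PMAJ:
  assumes "odd k"
  shows "phiBAL (2*k) (PMAJ k) \<mu> = (1/2) * (\<Sum>x\<in>Om. \<mu> x) ^ (2*k)"
proof -
  have "phiBAL (2*k) (PMAJ k) \<mu> = (1/2) * (\<Sum>\<tau>\<in>OmK (2*k). \<Prod>i<2*k. \<mu> (\<tau> i))"
    unfolding phiBAL_def sum_distrib_left
    by (intro sum.cong refl) (simp add: expectation_PMAJ_point[OF assms])
  also have "(\<Sum>\<tau>\<in>OmK (2*k). \<Prod>i<2*k. \<mu> (\<tau> i)) = (\<Prod>i<2*k. \<Sum>x\<in>Om. \<mu> x)"
    unfolding OmK_eq_PiE by (subst prod_sum_PiE) (auto simp: Om_def)
  finally show ?thesis by simp
qed

theorem BAL_PMAJ: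
  assumes "odd k"
  shows "BAL_cond (2*k) (PMAJ k)"
  unfolding BAL_cond_def phiBAL_PMAJ[OF assms]
proof (intro conjI allI impI)
  fix \<mu>1 \<mu>2 :: "int \<Rightarrow> real" and t :: real
  assume "distOm \<mu>1" "distOm \<mu>2"
  then have "(\<Sum>x\<in>Om. \<mu>1 x) = 1" "(\<Sum>x\<in>Om. \<mu>2 x) = 1"
    by (auto simp: distOm_def)
  moreover from this have "(\<Sum>x\<in>Om. t * \<mu>1 x + (1 - t) * \<mu>2 x) = 1"
    by (simp add: sum.distrib sum_distrib_left[symmetric])
  ultimately show "t * (1/2 * (\<Sum>x\<in>Om. \<mu>1 x) ^ (2*k)) + (1 - t) * (1/2 * (\<Sum>x\<in>Om. \<mu>2 x) ^ (2*k))
      \<le> 1/2 * (\<Sum>x\<in>Om. t * \<mu>1 x + (1 - t) * \<mu>2 x) ^ (2*k)"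
    by (simp add: field_simps)
next
  fix \<mu> :: "int \<Rightarrow> real" assume "distOm \<mu>"
  moreover have "(\<Sum>x\<in>Om. unifOm x) = 1" by (simp add: unifOm_def Om_def)
  ultimately show "1/2 * (\<Sum>x\<in>Om. \<mu> x) ^ (2*k) \<le> 1/2 * (\<Sum>x\<in>Om. unifOm x) ^ (2*k)"
    by (simp add: distOm_def)
qed


subsection \<open>Fourier analysis of the pair functional\<close>

definition character :: "nat set \<Rightarrow> (nat \<Rightarrow> int) \<Rightarrow> real" where
  "character S x = (\<Prod>i\<in>S. of_int (x i))"

definition fourier_coeff :: "nat \<Rightarrow> ((nat \<Rightarrow> int) \<Rightarrow> real) \<Rightarrow> nat set \<Rightarrow> real" where
  "fourier_coeff n f S = (\<Sum>x\<in>OmK n. f x * character S x)"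

text \<open>The pair functional of \<open>f\<close> at the coupling of correlation \<open>c\<close>, i.e.\ with
  \<open>\<rho>(a,b) = (1 + c a b)/4\<close>.\<close>
definition noise_form :: "nat \<Rightarrow> ((nat \<Rightarrow> int) \<Rightarrow> real) \<Rightarrow> real \<Rightarrow> real" where
  "noise_form n f c = (\<Sum>x\<in>OmK n. \<Sum>y\<in>OmK n. f x * f y *
       (\<Prod>i<n. (1 + c * of_int (x i) * of_int (y i)) / 4))"

lemma prod_noise_kernel_expand:
  "(\<Prod>i<n. (1 + c * of_int (x i) * of_int (y i)) / 4)
     = (\<Sum>S\<in>Pow {..<n}. c ^ card S * (character S x * character S y)) / 4 ^ n"
proof -
  have "(\<Prod>i<n. (1 + c * of_int (x i) * of_int (y i)) / (4::real))
      = (\<Prod>i<n. c * of_int (x i) * of_int (y i) + 1) / 4 ^ n"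
    by (simp add: prod_dividef add.commute)
  also have "(\<Prod>i<n. c * of_int (x i) * of_int (y i) + (1::real))
      = (\<Sum>S\<in>Pow {..<n}. (\<Prod>i\<in>S. c * of_int (x i) * of_int (y i)) * (\<Prod>i\<in>{..<n} - S. 1))"
    by (rule prod_add) simp
  also have "\<dots> = (\<Sum>S\<in>Pow {..<n}. c ^ card S * (character S x * character S y))"
    by (intro sum.cong refl) (auto simp: character_def prod.distrib dest: finite_subset)
  finally show ?thesis .
qed

lemma double_sum_eq_square:
  fixes u :: "'a \<Rightarrow> real"
  shows "(\<Sum>x\<in>A. \<Sum>y\<in>A. a * (u x * u y)) = a * (\<Sum>x\<in>A. u x)\<^sup>2"
  unfolding power2_eq_square sum_product by (simp add: sum_distrib_left)

lemma noise_form_fourier: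
  "noise_form n f c = (\<Sum>S\<in>Pow {..<n}. c ^ card S * (fourier_coeff n f S)\<^sup>2) / 4 ^ n"
proof -
  have "noise_form n f c = (\<Sum>x\<in>OmK n. \<Sum>y\<in>OmK n. \<Sum>S\<in>Pow {..<n}.
          (c ^ card S / 4 ^ n) * ((f x * character S x) * (f y * character S y)))"
    unfolding noise_form_def prod_noise_kernel_expand
    by (intro sum.cong refl) (simp add: sum_distrib_left sum_divide_distrib mult_ac)
  also have "\<dots> = (\<Sum>S\<in>Pow {..<n}. \<Sum>x\<in>OmK n. \<Sum>y\<in>OmK n.
          (c ^ card S / 4 ^ n) * ((f x * character S x) * (f y * character S y)))"
    by (simp add: sum.swap[of _ "Pow _"])
  also have "\<dots> = (\<Sum>S\<in>Pow {..<n}. (c ^ card S / 4 ^ n) * (fourier_coeff n f S)\<^sup>2)"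
    unfolding fourier_coeff_def by (intro sum.cong refl) (rule double_sum_eq_square)
  finally show ?thesis by (simp add: sum_divide_distrib)
qed

lemma prod_noise_kernel_one:
  assumes "x \<in> OmK n" "y \<in> OmK n"
  shows "(\<Prod>i<n. (1 + of_int (x i) * of_int (y i)) / 4) = (if x = y then 1 / 2 ^ n else (0::real))"
proof (cases "x = y")
  case True
  have "(\<Prod>i<n. (1 + of_int (x i) * of_int (y i)) / 4) = (\<Prod>i<n. 1/2 :: real)"
    using assms(1) True by (intro prod.cong) (auto simp: mem_OmK_iff Om_iff)
  then show ?thesis using True by (simp add: power_one_over)
next
  case False
  then obtain i where "i < n" "x i \<noteq> y i"
    using OmK_eqI[OF assms] by blast
  moreover from this have "x i \<in> Om" "y i \<in> Om"
    using assms by (auto simp: mem_OmK_iff)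
  ultimately have "i < n" "(1 + of_int (x i) * of_int (y i)) / 4 = (0::real)"
    by (auto simp: Om_iff)
  then show ?thesis using False by (intro trans[OF prod_zero]) auto
qed

lemma noise_form_one: "noise_form n f 1 = (\<Sum>x\<in>OmK n. (f x)\<^sup>2) / 2 ^ n"
proof -
  have "noise_form n f 1 = (\<Sum>x\<in>OmK n. \<Sum>y\<in>OmK n. if x = y then f x * f x / 2 ^ n else 0)"
    unfolding noise_form_def mult_1 by (intro sum.cong refl) (simp only: prod_noise_kernel_one, simp)
  also have "\<dots> = (\<Sum>x\<in>OmK n. f x * f x / 2 ^ n)" by (simp add: finite_OmK)
  finally show ?thesis by (simp add: power2_eq_square sum_divide_distrib)
qed

lemma noise_form_gt_at_zero:
  assumes odd_zero: "\<And>S. S \<subseteq> {..<n} \<Longrightarrow> odd (card S) \<Longrightarrow> fourier_coeff n f S = 0"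
    and S0: "S0 \<subseteq> {..<n}" "S0 \<noteq> {}" "fourier_coeff n f S0 \<noteq> 0"
    and "c \<noteq> 0"
  shows "noise_form n f 0 < noise_form n f c"
proof -
  have "noise_form n f c - noise_form n f 0
      = (\<Sum>S\<in>Pow {..<n}. (c ^ card S - 0 ^ card S) * (fourier_coeff n f S)\<^sup>2) / 4 ^ n"
    by (simp add: noise_form_fourier diff_divide_distrib[symmetric] sum_subtractf[symmetric] left_diff_distrib)
  moreover have "0 < (\<Sum>S\<in>Pow {..<n}. (c ^ card S - 0 ^ card S) * (fourier_coeff n f S)\<^sup>2)"
  proof (rule sum_pos2[of _ S0])
    have "card S0 \<noteq> 0" "even (card S0)"
      using S0 odd_zero[of S0] finite_subset[of S0 "{..<n}"] by auto
    then show "0 < (c ^ card S0 - 0 ^ card S0) * (fourier_coeff n f S0)\<^sup>2"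
      using S0(3) \<open>c \<noteq> 0\<close> by (simp add: zero_less_power_eq power_0_left)
  next
    fix S assume S: "S \<in> Pow {..<n}"
    show "0 \<le> (c ^ card S - 0 ^ card S) * (fourier_coeff n f S)\<^sup>2"
    proof (cases "odd (card S)")
      case True
      then show ?thesis using odd_zero[of S] S by simp
    next
      case False
      then show ?thesis by (simp add: zero_le_even_power power_0_left)
    qed
  qed (use S0 in auto)
  ultimately have "0 < noise_form n f c - noise_form n f 0"
    by simp
  then show ?thesis by simp
qed

context maj_constraint
begin

lemma character_negate_below:
  "S \<subseteq> {..<2*k} \<Longrightarrow> character S (negate_below (2*k) \<sigma>) = (-1) ^ card S * character S \<sigma>"
  unfolding character_def negate_below_def
  by (subst prod.cong[OF refl, where h = "\<lambda>i. - of_int (\<sigma> i)"]) (auto simp: prod_uminus)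

lemma fourier_coeff_psiMAJ_odd:
  assumes "S \<subseteq> {..<2*k}" "odd (card S)"
  shows "fourier_coeff (2*k) \<psi> S = 0"
proof -
  have "fourier_coeff (2*k) \<psi> S = (\<Sum>x\<in>OmK (2*k). 0) / 2"
    unfolding fourier_coeff_def
    by (rule sum_involution_half[where g = "negate_below (2*k)"])
       (use assms in \<open>auto simp: finite_OmK negate_below_in_OmK psiMAJ_negate_below character_negate_below\<close>)
  then show ?thesis by simp
qed

lemma exists_fourier_coeff_psiMAJ_nonzero:
  obtains S where "S \<subseteq> {..<2*k}" "S \<noteq> {}" "fourier_coeff (2*k) \<psi> S \<noteq> 0"
proof (rule ccontr)
  assume "\<not> thesis"
  then have zero: "\<And>S. S \<in> Pow {..<2*k} - {{}} \<Longrightarrow> fourier_coeff (2*k) \<psi> S = 0"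
    using that by blast
  have "\<psi> x ^ 2 = \<psi> x" for x
    using psiMAJ_0_or_1[of k \<tau> \<theta> x] by auto
  then have "noise_form (2*k) \<psi> 1 = 1/2"
    using sum_psiMAJ by (simp add: noise_form_one)
  then have parseval: "(\<Sum>S\<in>Pow {..<2*k}. (fourier_coeff (2*k) \<psi> S)\<^sup>2) = 4 ^ (2*k) / 2"
    by (simp add: noise_form_fourier)
  have "(\<Sum>S\<in>Pow {..<2*k}. (fourier_coeff (2*k) \<psi> S)\<^sup>2) = (fourier_coeff (2*k) \<psi> {})\<^sup>2"
    using zero by (subst sum.remove[of _ "{}"]) auto
  also have "\<dots> = (2 ^ (2*k) / 2)\<^sup>2"
    by (simp add: fourier_coeff_def character_def sum_psiMAJ)
  also have "\<dots> = ((2::real) ^ 2) ^ (2*k) / 4"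
    unfolding power_divide power_even_eq[symmetric] power_mult[symmetric] by (simp add: mult.commute)
  finally show False
    using parseval by simp
qed

lemma noise_form_psiMAJ_gt_at_zero: "c \<noteq> 0 \<Longrightarrow> noise_form (2*k) \<psi> 0 < noise_form (2*k) \<psi> c"
  using exists_fourier_coeff_psiMAJ_nonzero noise_form_gt_at_zero fourier_coeff_psiMAJ_odd by metis

end

lemma coupOm_correlation:
  assumes "coupOm \<rho>"
  obtains c where "\<And>a b. a \<in> Om \<Longrightarrow> b \<in> Om \<Longrightarrow> \<rho> (a, b) = (1 + c * of_int a * of_int b) / 4"
    and "\<rho> \<noteq> unifOm2 \<Longrightarrow> c \<noteq> 0"
proof -
  have "\<rho> (1, -1) + \<rho> (1, 1) = 1/2" "\<rho> (-1, -1) + \<rho> (-1, 1) = 1/2"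
    "\<rho> (-1, 1) + \<rho> (1, 1) = 1/2" "\<rho> (-1, -1) + \<rho> (1, -1) = 1/2"
    using assms unfolding coupOm_def by (auto simp: Om_def)
  then have \<rho>: "\<rho> (a, b) = (1 + (4 * \<rho> (1, 1) - 1) * of_int a * of_int b) / 4" if "a \<in> Om" "b \<in> Om" for a b
    using that by (auto simp: Om_iff)
  moreover have "\<rho> = unifOm2" if "4 * \<rho> (1, 1) - 1 = 0"
  proof
    fix z
    show "\<rho> z = unifOm2 z"
      using \<rho>[of "fst z" "snd z"] that assms by (cases z) (auto simp: unifOm2_def coupOm_def)
  qed
  ultimately show ?thesis using that by blast
qed

lemma phiMIN_PMAJ:
  assumes "\<And>a b. a \<in> Om \<Longrightarrow> b \<in> Om \<Longrightarrow> \<rho> (a, b) = (1 + c * of_int a * of_int b) / 4"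
  shows "phiMIN (2*k) (PMAJ k) \<rho> = (\<Sum>\<psi>\<in>PsiMAJ k. noise_form (2*k) \<psi> c) / card (PsiMAJ k)"
proof -
  have "phiMIN (2*k) (PMAJ k) \<rho> = (\<Sum>\<sigma>\<in>OmK (2*k). \<Sum>\<tau>\<in>OmK (2*k).
      (\<Sum>\<psi>\<in>PsiMAJ k. \<psi> \<sigma> * \<psi> \<tau> * (\<Prod>i<2*k. (1 + c * of_int (\<sigma> i) * of_int (\<tau> i)) / 4)) / card (PsiMAJ k))"
    unfolding phiMIN_def expectation_PMAJ
  proof (intro sum.cong refl)
    fix \<sigma> \<tau> assume "\<sigma> \<in> OmK (2*k)" "\<tau> \<in> OmK (2*k)"
    then have "(\<Prod>i<2*k. \<rho> (\<sigma> i, \<tau> i)) = (\<Prod>i<2*k. (1 + c * of_int (\<sigma> i) * of_int (\<tau> i)) / 4)"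
      by (intro prod.cong refl assms) (auto simp: mem_OmK_iff)
    then show "(\<Sum>\<psi>\<in>PsiMAJ k. \<psi> \<sigma> * \<psi> \<tau>) / card (PsiMAJ k) * (\<Prod>i<2*k. \<rho> (\<sigma> i, \<tau> i)) =
      (\<Sum>\<psi>\<in>PsiMAJ k. \<psi> \<sigma> * \<psi> \<tau> * (\<Prod>i<2*k. (1 + c * of_int (\<sigma> i) * of_int (\<tau> i)) / 4)) / card (PsiMAJ k)"
      by (simp add: sum_distrib_right)
  qed
  also have "\<dots> = (\<Sum>\<psi>\<in>PsiMAJ k. noise_form (2*k) \<psi> c) / card (PsiMAJ k)"
    unfolding noise_form_def sum_divide_distrib[symmetric]
    by (simp add: sum.swap[of _ "PsiMAJ k"])
  finally show ?thesis .
qed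

theorem MIN_PMAJ:
  assumes "odd k"
  shows "MIN_cond (2*k) (PMAJ k)"
  unfolding MIN_cond_def
proof (intro allI impI)
  fix \<rho> assume "coupOm \<rho>" "\<rho> \<noteq> unifOm2"
  then obtain c where \<rho>: "\<And>a b. a \<in> Om \<Longrightarrow> b \<in> Om \<Longrightarrow> \<rho> (a, b) = (1 + c * of_int a * of_int b) / 4"
    and "c \<noteq> 0"
    using coupOm_correlation by metis
  have "(\<Sum>\<psi>\<in>PsiMAJ k. noise_form (2*k) \<psi> 0) < (\<Sum>\<psi>\<in>PsiMAJ k. noise_form (2*k) \<psi> c)"
  proof (rule sum_strict_mono[OF finite_PsiMAJ PsiMAJ_nonempty])
    fix \<psi> assume "\<psi> \<in> PsiMAJ k"
    then show "noise_form (2*k) \<psi> 0 < noise_form (2*k) \<psi> c"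
      using PsiMAJ_elim[OF _ assms] maj_constraint.noise_form_psiMAJ_gt_at_zero \<open>c \<noteq> 0\<close> by metis
  qed
  moreover have "phiMIN (2*k) (PMAJ k) unifOm2 = (\<Sum>\<psi>\<in>PsiMAJ k. noise_form (2*k) \<psi> 0) / card (PsiMAJ k)"
    by (rule phiMIN_PMAJ) (simp add: unifOm2_def)
  ultimately show "phiMIN (2*k) (PMAJ k) unifOm2 < phiMIN (2*k) (PMAJ k) \<rho>"
    using phiMIN_PMAJ[OF \<rho>] card_PsiMAJ_pos[of k] by (simp add: divide_strict_right_mono)
qed

subsection \<open>Unicyclic instances\<close>

definition vars :: "('c \<Rightarrow> 'v list) \<Rightarrow> 'c set \<Rightarrow> 'v set" where
  "vars dv G = (\<Union>a\<in>G. set (dv a))"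

definition incidences :: "('c \<Rightarrow> 'v list) \<Rightarrow> 'c set \<Rightarrow> ('v \<times> 'c) set" where
  "incidences dv G = {(v, a). a \<in> G \<and> v \<in> set (dv a)}"

lemma finite_vars: "finite G \<Longrightarrow> finite (vars dv G)"
  by (auto simp: vars_def)

lemma card_incidences: "finite G \<Longrightarrow> card (incidences dv G) = (\<Sum>a\<in>G. card (set (dv a)))"
proof -
  assume "finite G"
  have "incidences dv G = (\<lambda>(a, v). (v, a)) ` (SIGMA a:G. set (dv a))"
    by (auto simp: incidences_def)
  moreover have "inj_on (\<lambda>(a, v). (v, a)) (SIGMA a:G. set (dv a))"
    by (auto simp: inj_on_def)
  ultimately show ?thesis
    using \<open>finite G\<close> by (simp add: card_image card_SigmaI)
qed

lemma sum_card_filter_eq_sum_degree: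
  assumes "finite G"
  shows "(\<Sum>a\<in>G. card {v\<in>set (dv a). Q v}) = (\<Sum>v\<in>{v\<in>vars dv G. Q v}. card {a\<in>G. v \<in> set (dv a)})"
proof -
  have fin: "finite {v\<in>vars dv G. Q v}"
    by (rule finite_subset[OF _ finite_vars[OF assms]]) auto
  have "(\<Sum>a\<in>G. card {v\<in>set (dv a). Q v}) = card (SIGMA a:G. {v\<in>set (dv a). Q v})"
    using assms by (simp add: card_SigmaI)
  also have "(SIGMA a:G. {v\<in>set (dv a). Q v})
      = (\<lambda>(v, a). (a, v)) ` (SIGMA v:{v\<in>vars dv G. Q v}. {a\<in>G. v \<in> set (dv a)})"
    by (auto simp: vars_def)
  also have "card \<dots> = card (SIGMA v:{v\<in>vars dv G. Q v}. {a\<in>G. v \<in> set (dv a)})"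
    by (rule card_image) (auto simp: inj_on_def)
  also have "\<dots> = (\<Sum>v\<in>{v\<in>vars dv G. Q v}. card {a\<in>G. v \<in> set (dv a)})"
    using fin assms by (simp add: card_SigmaI)
  finally show ?thesis .
qed

lemma two_le_card_iff_other:
  assumes "finite X" "a \<in> X"
  shows "2 \<le> card X \<longleftrightarrow> (\<exists>b\<in>X. b \<noteq> a)"
proof
  assume "2 \<le> card X"
  then have "X - {a} \<noteq> {}"
    using assms by (metis One_nat_def card.empty card_Diff_singleton diff_is_0_eq numeral_2_eq_2 not_less_eq_eq)
  then show "\<exists>b\<in>X. b \<noteq> a" by auto
next
  assume "\<exists>b\<in>X. b \<noteq> a"
  then obtain b where "b \<in> X" "b \<noteq> a" by blast
  then have "card {a, b} \<le> card X" using assms by (intro card_mono) auto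
  then show "2 \<le> card X" using \<open>b \<noteq> a\<close> by simp
qed

lemma mem_vars_remove_iff:
  assumes "finite G" "a \<in> G" "v \<in> set (dv a)"
  shows "v \<in> vars dv (G - {a}) \<longleftrightarrow> 2 \<le> card {b\<in>G. v \<in> set (dv b)}"
  using two_le_card_iff_other[of "{b\<in>G. v \<in> set (dv b)}" a] assms by (auto simp: vars_def)

text \<open>With \<open>d v\<close> the number of constraints containing \<open>v\<close>, sparsity says
  \<open>\<Sum>\<^sub>v (d v - 1) \<le> |G|\<close>, hence \<open>\<Sum>\<^bsub>d v \<ge> 2\<^esub> d v \<le> 2|G|\<close>; the left-hand side counts the
  shared positions, of which there would be at least \<open>3|G|\<close>.\<close>
lemma exists_constraint_few_shared:
  assumes fin: "finite G" and "G \<noteq> {}"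
    and sparse: "card (incidences dv G) \<le> card (vars dv G) + card G"
  shows "\<exists>a\<in>G. card (set (dv a) \<inter> vars dv (G - {a})) \<le> 2"
proof (rule ccontr)
  assume "\<not> ?thesis"
  then have many: "3 \<le> card (set (dv a) \<inter> vars dv (G - {a}))" if "a \<in> G" for a
    using that by force
  define d where "d v = card {a\<in>G. v \<in> set (dv a)}" for v
  define W1 where "W1 = {v\<in>vars dv G. \<not> 2 \<le> d v}"
  define W2 where "W2 = {v\<in>vars dv G. 2 \<le> d v}"
  have fin_W: "finite W1" "finite W2"
    unfolding W1_def W2_def by (auto intro: finite_subset[OF _ finite_vars[OF fin]])
  have "3 * card G \<le> (\<Sum>a\<in>G. card {v\<in>set (dv a). 2 \<le> d v})"
  proof -
    have "set (dv a) \<inter> vars dv (G - {a}) = {v\<in>set (dv a). 2 \<le> d v}" if "a \<in> G" for a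
      using mem_vars_remove_iff[OF fin that, where dv = dv] by (auto simp: d_def)
    then have "(\<Sum>a\<in>G. 3) \<le> (\<Sum>a\<in>G. card {v\<in>set (dv a). 2 \<le> d v})"
      using many by (intro sum_mono) auto
    then show ?thesis by simp
  qed
  also have "\<dots> = (\<Sum>v\<in>W2. d v)"
    using sum_card_filter_eq_sum_degree[OF fin] by (simp add: W2_def d_def)
  finally have shared: "3 * card G \<le> (\<Sum>v\<in>W2. d v)" .
  have W: "vars dv G = W1 \<union> W2" "W1 \<inter> W2 = {}"
    by (auto simp: W1_def W2_def)
  have d1: "d v = 1" if "v \<in> W1" for v
  proof -
    from that obtain a where "a \<in> G" "v \<in> set (dv a)"
      by (auto simp: W1_def vars_def)
    then have "0 < d v" using fin by (auto simp: d_def card_gt_0_iff)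
    then show ?thesis using that by (simp add: W1_def)
  qed
  have "card (incidences dv G) = (\<Sum>v\<in>vars dv G. d v)"
    using sum_card_filter_eq_sum_degree[OF fin, of dv "\<lambda>_. True"] by (simp add: card_incidences fin d_def)
  also have "\<dots> = (\<Sum>v\<in>W1. d v) + (\<Sum>v\<in>W2. d v)"
    unfolding W(1) using fin_W W(2) by (rule sum.union_disjoint)
  finally have "card (incidences dv G) = card W1 + (\<Sum>v\<in>W2. d v)"
    using d1 by simp
  moreover have "card (vars dv G) = card W1 + card W2"
    unfolding W(1) using fin_W W(2) by (rule card_Un_disjoint)
  moreover have "2 * card W2 \<le> (\<Sum>v\<in>W2. d v)"
    using sum_mono[of W2 "\<lambda>_. 2" d] by (simp add: W2_def)
  moreover have "0 < card G"
    using fin \<open>G \<noteq> {}\<close> by (simp add: card_gt_0_iff)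
  ultimately show False
    using sparse shared by linarith
qed

lemma connected_descent:
  assumes conn: "\<forall>x\<in>X. \<forall>y\<in>X. (x, y) \<in> R\<^sup>*" and "H \<subseteq> X" "H \<noteq> {}"
  obtains towards and level :: "'a \<Rightarrow> nat"
  where "\<And>x. x \<in> X - H \<Longrightarrow> (x, towards x) \<in> R" "\<And>x. x \<in> X - H \<Longrightarrow> level (towards x) < level x"
proof -
  obtain h where h: "h \<in> H" using assms by blast
  define level where "level x = (LEAST n. \<exists>y\<in>H. (x, y) \<in> R ^^ n)" for x
  have reach: "\<exists>y\<in>H. (x, y) \<in> R ^^ level x" if "x \<in> X" for x
  proof -
    have "(x, h) \<in> R\<^sup>*" using conn that h \<open>H \<subseteq> X\<close> by blast
    then obtain n where "(x, h) \<in> R ^^ n" by (auto simp: rtrancl_power)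
    then have "\<exists>n. \<exists>y\<in>H. (x, y) \<in> R ^^ n" using h by blast
    then show ?thesis unfolding level_def by (rule LeastI_ex)
  qed
  have level_le: "level x \<le> n" if "(x, y) \<in> R ^^ n" "y \<in> H" for x y n
    unfolding level_def using that by (intro Least_le) blast
  have step: "\<exists>z. (x, z) \<in> R \<and> level z < level x" if x: "x \<in> X - H" for x
  proof -
    obtain y where y: "y \<in> H" "(x, y) \<in> R ^^ level x" using reach x by blast
    show ?thesis
    proof (cases "level x")
      case 0
      then show ?thesis using y x by simp
    next
      case (Suc m)
      then obtain z where "(x, z) \<in> R" "(z, y) \<in> R ^^ m"
        using relpow_Suc_D2[of x y m R] y by auto
      then show ?thesis using level_le[of z y m] y Suc by auto
    qed
  qed
  then have "\<forall>x\<in>X - H. \<exists>z. (x, z) \<in> R \<and> level z < level x"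
    by blast
  from bchoice[OF this]
  obtain towards where "\<forall>x\<in>X - H. (x, towards x) \<in> R \<and> level (towards x) < level x"
    by (elim exE)
  then show ?thesis
    by (intro that[of towards level]) auto
qed

lemma inj_on_descent_edges:
  assumes "\<And>x. x \<in> A \<Longrightarrow> level (towards x) < (level x :: nat)"
  shows "inj_on (\<lambda>x. {x, towards x}) A"
proof (rule inj_onI)
  fix x y assume x: "x \<in> A" and y: "y \<in> A" and eq: "{x, towards x} = {y, towards y}"
  show "x = y"
  proof (rule ccontr)
    assume "x \<noteq> y"
    then have "x = towards y" "y = towards x" using eq by (auto simp: doubleton_eq_iff)
    then show False using assms[OF x] assms[OF y] by simp
  qed
qed

text \<open>Walking from every vertex outside the factor graph of \<open>G\<close> one step towards it uses
  pairwise distinct edges outside \<open>G\<close>.\<close>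
lemma card_outside_le_card_incidences_outside:
  fixes V :: "'v set" and F :: "'c set"
  assumes "finite V" "finite F" and sub: "\<forall>a\<in>F. set (dv a) \<subseteq> V"
    and conn: "\<forall>x\<in>Inl ` V \<union> Inr ` F. \<forall>y\<in>Inl ` V \<union> Inr ` F. (x, y) \<in> (bigraph dv F)\<^sup>*"
    and "G \<subseteq> F" "G \<noteq> {}"
  shows "card ((V <+> F) - (vars dv G <+> G)) \<le> card (incidences dv F - incidences dv G)"
proof -
  define X where "X = Inl ` V \<union> Inr ` F"
  define H where "H = Inl ` vars dv G \<union> Inr ` G"
  define edge :: "'v \<times> 'c \<Rightarrow> ('v + 'c) set" where "edge = (\<lambda>(v, a). {Inl v, Inr a})"
  have fin: "finite (incidences dv F)"
    using assms finite_subset[of "incidences dv F" "V \<times> F"] by (auto simp: incidences_def)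
  have "H \<subseteq> X" "H \<noteq> {}"
    using sub \<open>G \<subseteq> F\<close> \<open>G \<noteq> {}\<close> by (auto simp: H_def X_def vars_def)
  then obtain towards and level :: "_ \<Rightarrow> nat"
    where step: "\<And>x. x \<in> X - H \<Longrightarrow> (x, towards x) \<in> bigraph dv F"
      and descent: "\<And>x. x \<in> X - H \<Longrightarrow> level (towards x) < level x"
    using connected_descent[OF conn[folded X_def] \<open>H \<subseteq> X\<close> \<open>H \<noteq> {}\<close>] by blast
  have edges: "(\<lambda>x. {x, towards x}) ` (X - H) \<subseteq> edge ` (incidences dv F - incidences dv G)"
  proof clarify
    fix x assume x: "x \<in> X" "x \<notin> H"
    from step[of x] x consider
        v a where "x = Inl v" "towards x = Inr a" "(v, a) \<in> incidences dv F - incidences dv G"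
      | v a where "x = Inr a" "towards x = Inl v" "(v, a) \<in> incidences dv F - incidences dv G"
      by (auto simp: bigraph_def H_def vars_def incidences_def image_iff)
    then show "{x, towards x} \<in> edge ` (incidences dv F - incidences dv G)"
      by cases (auto simp: edge_def insert_commute intro!: image_eqI)
  qed
  have "card (X - H) = card ((\<lambda>x. {x, towards x}) ` (X - H))"
    using card_image[OF inj_on_descent_edges[of "X - H" level towards]] descent by simp
  also have "\<dots> \<le> card (edge ` (incidences dv F - incidences dv G))"
    using edges fin by (intro card_mono) auto
  also have "\<dots> \<le> card (incidences dv F - incidences dv G)"
    using fin by (intro card_image_le) auto
  finally show ?thesis
    by (simp add: X_def H_def Plus_def)
qed

text \<open>In the factor graph of \<open>F\<close> the edges are as many as the vertices, so the edges outside
  \<open>G\<close> can be at most as many as the vertices outside \<open>G\<close> only if \<open>G\<close> has at most one more edge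
  than vertices.\<close>
lemma card_incidences_le:
  fixes V :: "'v set" and F :: "'c set"
  assumes "finite V" "finite F" and sub: "\<forall>a\<in>F. set (dv a) \<subseteq> V"
    and conn: "\<forall>x\<in>Inl ` V \<union> Inr ` F. \<forall>y\<in>Inl ` V \<union> Inr ` F. (x, y) \<in> (bigraph dv F)\<^sup>*"
    and count: "card (incidences dv F) = card V + card F"
    and "G \<subseteq> F" "G \<noteq> {}"
  shows "card (incidences dv G) \<le> card (vars dv G) + card G"
proof -
  have fin: "finite G" "finite (vars dv G)" "finite (incidences dv F)"
    using assms finite_subset[of "incidences dv F" "V \<times> F"] finite_vars[of G dv]
    by (auto simp: incidences_def intro: finite_subset)
  have "vars dv G <+> G \<subseteq> V <+> F"
    using sub \<open>G \<subseteq> F\<close> by (auto simp: vars_def)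
  then have "card ((V <+> F) - (vars dv G <+> G)) = card V + card F - (card (vars dv G) + card G)"
    "card (vars dv G) + card G \<le> card V + card F"
    using assms(1,2) fin card_mono[of "V <+> F" "vars dv G <+> G"]
    by (simp_all add: card_Diff_subset card_Plus)
  moreover have "incidences dv G \<subseteq> incidences dv F"
    using \<open>G \<subseteq> F\<close> by (auto simp: incidences_def)
  then have "card (incidences dv F - incidences dv G) = card (incidences dv F) - card (incidences dv G)"
    "card (incidences dv G) \<le> card (incidences dv F)"
    using fin(3) by (simp_all add: card_Diff_subset finite_subset card_mono)
  ultimately show ?thesis
    using card_outside_le_card_incidences_outside[OF assms(1-4,6,7)] count by linarith
qed

lemma tuple_of_flip:
  assumes "distinct xs" "length xs = K" "p < K"
  shows "tuple_of K (\<sigma>(xs ! p := - \<sigma> (xs ! p))) xs = flip_at p (tuple_of K \<sigma> xs)"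
proof
  fix i
  show "tuple_of K (\<sigma>(xs ! p := - \<sigma> (xs ! p))) xs i = flip_at p (tuple_of K \<sigma> xs) i"
    using assms nth_eq_iff_index_eq[OF assms(1), of i p] by (auto simp: tuple_of_def flip_at_def)
qed

lemma tuple_of_in_OmK: "length xs = K \<Longrightarrow> \<forall>v\<in>set xs. \<sigma> v \<in> Om \<Longrightarrow> tuple_of K \<sigma> xs \<in> OmK K"
  by (auto simp: tuple_of_def mem_OmK_iff)

lemma tuple_of_cong: "length xs = K \<Longrightarrow> \<forall>v\<in>set xs. \<sigma> v = \<sigma>' v \<Longrightarrow> tuple_of K \<sigma> xs = tuple_of K \<sigma>' xs"
  by (auto simp: tuple_of_def fun_eq_iff)

context maj_constraint
begin

lemma exists_parity_var_outside:
  assumes "3 \<le> k" "distinct xs" "length xs = 2*k" "card (set xs \<inter> W) \<le> 2"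
  shows "\<exists>j<k. xs ! \<theta> j \<notin> W"
proof (rule ccontr)
  assume neg: "\<not> (\<exists>j<k. xs ! \<theta> j \<notin> W)"
  have in_W: "xs ! \<theta> j \<in> set xs \<inter> W" if "j < 3" for j
  proof -
    have "j < k" "j < 2*k" using that assms(1) by linarith+
    then show ?thesis
      using neg \<theta>_less[of j] assms(3) by auto
  qed
  have distinct: "xs ! \<theta> i \<noteq> xs ! \<theta> j" if "i < 3" "j < 3" "i \<noteq> j" for i j
  proof -
    have "i < 2*k" "j < 2*k" using that assms(1) by linarith+
    then have "\<theta> i < length xs" "\<theta> j < length xs" "\<theta> i \<noteq> \<theta> j"
      using \<theta>_less \<theta>_eq_iff \<open>i \<noteq> j\<close> assms(3) by simp_all
    then show ?thesis
      by (simp add: nth_eq_iff_index_eq[OF assms(2)])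
  qed
  have "card {xs ! \<theta> 0, xs ! \<theta> 1, xs ! \<theta> 2} = 3"
    using distinct[of 0 1] distinct[of 0 2] distinct[of 1 2] by simp
  moreover have "card {xs ! \<theta> 0, xs ! \<theta> 1, xs ! \<theta> 2} \<le> card (set xs \<inter> W)"
    using in_W[of 0] in_W[of 1] in_W[of 2] by (intro card_mono) auto
  ultimately show False
    using assms(4) by simp
qed

lemma satisfy_by_parity_var:
  assumes "distinct xs" "length xs = 2*k" "\<forall>v\<in>set xs. \<sigma> v \<in> Om" "j < k"
  shows "\<exists>\<epsilon>\<in>{1, -1}. \<psi> (tuple_of (2*k) (\<sigma>(xs ! \<theta> j := \<epsilon> * \<sigma> (xs ! \<theta> j))) xs) = 1"
proof (cases "\<psi> (tuple_of (2*k) \<sigma> xs) = 1")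
  case True
  then show ?thesis
    by (intro bexI[of _ 1]) simp_all
next
  case False
  then have "\<psi> (tuple_of (2*k) \<sigma> xs) = 0"
    using psiMAJ_0_or_1 by metis
  moreover have "tuple_of (2*k) (\<sigma>(xs ! \<theta> j := - \<sigma> (xs ! \<theta> j))) xs = flip_at (\<theta> j) (tuple_of (2*k) \<sigma> xs)"
    using tuple_of_flip[OF assms(1,2)] assms(4) \<theta>_less[of j] by simp
  ultimately show ?thesis
    using psiMAJ_flip_parity_var[OF tuple_of_in_OmK[OF assms(2,3)] assms(4)]
    by (intro bexI[of _ "-1"]) simp_all
qed

end

lemma satisfiable_insert_constraint:
  assumes k: "odd k" "3 \<le> k"
    and a: "length (dv a) = 2*k" "distinct (dv a)" "set (dv a) \<subseteq> V" "ps a \<in> PsiMAJ k"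
    and few: "card (set (dv a) \<inter> vars dv G) \<le> 2"
    and len: "\<forall>b\<in>G. length (dv b) = 2*k"
    and \<sigma>: "\<forall>v\<in>V. \<sigma> v \<in> Om" "\<forall>b\<in>G. ps b (tuple_of (2*k) \<sigma> (dv b)) = 1"
  shows "\<exists>\<sigma>'. (\<forall>v\<in>V. \<sigma>' v \<in> Om) \<and> (\<forall>b\<in>insert a G. ps b (tuple_of (2*k) \<sigma>' (dv b)) = 1)"
proof -
  obtain \<tau> \<theta> where ps_a: "ps a = psiMAJ k \<tau> \<theta>" and mc: "maj_constraint k \<tau> \<theta>"
    using PsiMAJ_elim a(4) k(1) by blast
  obtain j where j: "j < k" and outside: "dv a ! \<theta> j \<notin> vars dv G"
    using maj_constraint.exists_parity_var_outside[OF mc k(2) a(2,1) few] by blast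
  define x where "x = dv a ! \<theta> j"
  have "x \<in> V"
    using maj_constraint.\<theta>_less[OF mc, of j] j a(1,3) by (auto simp: x_def)
  have "\<forall>v\<in>set (dv a). \<sigma> v \<in> Om"
    using \<sigma>(1) a(3) by blast
  from maj_constraint.satisfy_by_parity_var[OF mc a(2,1) this j]
  obtain \<epsilon> where \<epsilon>: "\<epsilon> \<in> {1, -1}" and sat_a: "ps a (tuple_of (2*k) (\<sigma>(x := \<epsilon> * \<sigma> x)) (dv a)) = 1"
    unfolding ps_a x_def by blast
  define \<sigma>' where "\<sigma>' = \<sigma>(x := \<epsilon> * \<sigma> x)"
  have "\<forall>v\<in>V. \<sigma>' v \<in> Om"
    using \<sigma>(1) \<epsilon> \<open>x \<in> V\<close> by (auto simp: \<sigma>'_def Om_iff)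
  moreover have "ps b (tuple_of (2*k) \<sigma>' (dv b)) = 1" if "b \<in> G" for b
  proof -
    have "x \<notin> set (dv b)"
      using outside that by (auto simp: x_def vars_def)
    then have "tuple_of (2*k) \<sigma>' (dv b) = tuple_of (2*k) \<sigma> (dv b)"
      using len that by (intro tuple_of_cong) (auto simp: \<sigma>'_def)
    then show ?thesis using \<sigma>(2) that by simp
  qed
  ultimately show ?thesis
    using sat_a unfolding \<sigma>'_def[symmetric] by blast
qed

lemma satisfiable_of_sparse:
  assumes k: "odd k" "3 \<le> k"
    and cons: "\<forall>a\<in>F. length (dv a) = 2*k \<and> distinct (dv a) \<and> set (dv a) \<subseteq> V \<and> ps a \<in> PsiMAJ k"
    and sparse: "\<forall>G\<subseteq>F. G \<noteq> {} \<longrightarrow> card (incidences dv G) \<le> card (vars dv G) + card G"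
    and "finite G" "G \<subseteq> F"
  shows "\<exists>\<sigma>. (\<forall>v\<in>V. \<sigma> v \<in> Om) \<and> (\<forall>a\<in>G. ps a (tuple_of (2*k) \<sigma> (dv a)) = 1)"
  using \<open>finite G\<close> \<open>G \<subseteq> F\<close>
proof (induction G rule: finite_psubset_induct)
  case (psubset G)
  show ?case
  proof (cases "G = {}")
    case True
    then show ?thesis by (intro exI[of _ "\<lambda>_. 1"]) (auto simp: Om_iff)
  next
    case False
    obtain a where a: "a \<in> G" and few: "card (set (dv a) \<inter> vars dv (G - {a})) \<le> 2"
      using exists_constraint_few_shared[OF psubset.hyps(1) False sparse[rule_format, OF psubset.prems False]]
      by blast
    obtain \<sigma> where \<sigma>: "\<forall>v\<in>V. \<sigma> v \<in> Om" "\<forall>b\<in>G - {a}. ps b (tuple_of (2*k) \<sigma> (dv b)) = 1"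
      using psubset.IH[of "G - {a}"] a psubset.prems by blast
    have "a \<in> F" "\<forall>b\<in>G - {a}. length (dv b) = 2*k"
      using a psubset.prems cons by auto
    with cons have "length (dv a) = 2*k" "distinct (dv a)" "set (dv a) \<subseteq> V" "ps a \<in> PsiMAJ k"
      by simp_all
    from satisfiable_insert_constraint[OF k this few \<open>\<forall>b\<in>G - {a}. length (dv b) = 2*k\<close> \<sigma>]
    show ?thesis
      using a by (simp add: insert_absorb)
  qed
qed

theorem UNI_PMAJ:
  assumes "odd k" "3 \<le> k" "unicyclic_csp (2*k) (PsiMAJ k) V F dv ps"
  shows "satisfiable_csp (2*k) V F dv ps"
proof -
  have csp: "finite V" "finite F"
      "\<forall>a\<in>F. length (dv a) = 2*k \<and> distinct (dv a) \<and> set (dv a) \<subseteq> V \<and> ps a \<in> PsiMAJ k"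
      "\<forall>x\<in>Inl ` V \<union> Inr ` F. \<forall>y\<in>Inl ` V \<union> Inr ` F. (x, y) \<in> (bigraph dv F)\<^sup>*"
      "card (incidences dv F) = card V + card F"
    using assms(3) unfolding unicyclic_csp_def incidences_def by simp_all
  have "\<forall>a\<in>F. set (dv a) \<subseteq> V"
    using csp(3) by blast
  then have "\<forall>G\<subseteq>F. G \<noteq> {} \<longrightarrow> card (incidences dv G) \<le> card (vars dv G) + card G"
    using card_incidences_le[OF csp(1,2) _ csp(4,5)] by blast
  then obtain \<sigma> where "\<forall>v\<in>V. \<sigma> v \<in> Om" "\<forall>a\<in>F. ps a (tuple_of (2*k) \<sigma> (dv a)) = 1"
    using satisfiable_of_sparse[OF assms(1,2) csp(3) _ csp(2) subset_refl] by blast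
  moreover from this(2) have "(\<Prod>a\<in>F. ps a (tuple_of (2*k) \<sigma> (dv a))) = 1"
    by (rule prod.neutral)
  ultimately show ?thesis
    unfolding satisfiable_csp_def by (intro exI[of _ \<sigma>]) simp
qed

theorem mainTheorem16:
  fixes k :: nat
  assumes "odd k" and "k \<ge> 3"
  shows "SYM_cond (2*k) (PsiMAJ k) (PMAJ k)
       \<and> BAL_cond (2*k) (PMAJ k)
       \<and> MIN_cond (2*k) (PMAJ k)
       \<and> (\<forall>(V :: 'v set) (F :: 'c set) dv ps.
            unicyclic_csp (2*k) (PsiMAJ k) V F dv ps \<longrightarrow> satisfiable_csp (2*k) V F dv ps)"
  using SYM_PMAJ[OF assms] BAL_PMAJ[OF assms(1)] MIN_PMAJ[OF assms(1)] UNI_PMAJ[OF assms] by blast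

end
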